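(* In Ruleset B, for any superposition of single Nim heaps with $k=\max_{1\le j\le\ell} i_j\ge1$, \[\langle \mathrm{Nim}(i_1),\ldots,\mathrm{Nim}(i_\ell)\rangle_B\equiv\begin{cases}0 & \text{if } k=2,\\ * & \text{if } k=1,\\ *(k-1) & \text{otherwise.}\end{cases}\]
   Context: Single-heap Nim: $\mathrm{Nim}(x)$ is a heap of $x$ tokens; classical move $(1,-j)$, $j\ge1$, removes $j$ tokens and is illegal if fewer than $j$ tokens remain. Quantum variation: a position is a nonempty finite set $\langle G_1,\ldots,G_n\rangle$ of classical positions; a classical move is legal if legal in some $G_i$; a Q-move is a nonempty set of legal classical moves, leading to the superposition of all legal results of applying one of its moves to one of the $G_i$. Ruleset B (subscript $B$): only Q-moves consisting of at least two distinct classical moves are allowed, except that when the player has exactly one legal classical move overall, he may play it as an unsuperposed move. The player with no allowed Q-move loses. $\equiv$ is game equivalence, $*k$ the value of a classical Nim heap of $k$ tokens, $*=*1$, $*0=0$. *)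

theory Defs
  imports Main "HOL-Library.FSet"
begin

datatype game = Game (opts: "game fset")

definition summoves :: "game \<times> game \<Rightarrow> (game \<times> game) set" where
  "summoves p = {(g', snd p) | g'. g' |\<in>| opts (fst p)} \<union> {(fst p, x') | x'. x' |\<in>| opts (snd p)}"

text \<open>First player (player to move) wins G + X under normal play.  Least fixed point:
  there is a move after which every reply leads again to a first-player win.\<close>
inductive Nwin :: "game \<Rightarrow> game \<Rightarrow> bool" where
  "p' \<in> summoves (G, X) \<Longrightarrow> (\<forall>(a, b) \<in> summoves p'. Nwin a b) \<Longrightarrow> Nwin G X"

definition game_equiv :: "game \<Rightarrow> game \<Rightarrow> bool" (infix "\<equiv>\<^sub>g" 50) where
  "G \<equiv>\<^sub>g H \<longleftrightarrow> (\<forall>X. Nwin G X \<longleftrightarrow> Nwin H X)"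

text \<open>Nimbers: *k has options *0, ..., *(k-1).\<close>
primrec nims :: "nat \<Rightarrow> game fset" where
  "nims 0 = {||}"
| "nims (Suc n) = finsert (Game (nims n)) (nims n)"

definition nim :: "nat \<Rightarrow> game" where
  "nim k = Game (nims k)"

text \<open>A position is a nonempty finite set of heap sizes.  A classical move is removal of
  j \<ge> 1 tokens; it is legal in the superposition if legal in some component.\<close>
definition legal_moves :: "nat set \<Rightarrow> nat set" where
  "legal_moves S = {j. 1 \<le> j \<and> (\<exists>i\<in>S. j \<le> i)}"

definition qresult :: "nat set \<Rightarrow> nat set \<Rightarrow> nat set" where
  "qresult S M = {i - j | i j. i \<in> S \<and> j \<in> M \<and> j \<le> i}"

definition allowedB :: "nat set \<Rightarrow> nat set \<Rightarrow> bool" where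
  "allowedB S M \<longleftrightarrow> M \<noteq> {} \<and> M \<subseteq> legal_moves S \<and>
     (2 \<le> card M \<or> (card (legal_moves S) = 1 \<and> card M = 1))"

lemma legal_moves_sub: "finite S \<Longrightarrow> legal_moves S \<subseteq> {1..Max S}"
  unfolding legal_moves_def by (auto intro: order_trans[OF _ Max_ge])

lemma qresult_less:
  assumes "finite S" "allowedB S M" "x \<in> qresult S M"
  shows "x < Max S"
proof -
  from assms(3) obtain i j where "i \<in> S" "j \<in> M" "j \<le> i" "x = i - j"
    unfolding qresult_def by blast
  moreover have "1 \<le> j" using assms(2) \<open>j \<in> M\<close> unfolding allowedB_def legal_moves_def by auto
  moreover have "i \<le> Max S" using assms(1) \<open>i \<in> S\<close> by simp
  ultimately show ?thesis by linarith
qed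

lemma qresult_fin_ne:
  assumes "finite S" "allowedB S M"
  shows "finite (qresult S M) \<and> qresult S M \<noteq> {}"
proof
  have "finite M" using assms legal_moves_sub[OF assms(1)] unfolding allowedB_def
    by (meson finite_atLeastAtMost finite_subset)
  then have "finite ((\<lambda>(i, j). i - j) ` (S \<times> M))" using assms(1) by simp
  moreover have "qresult S M \<subseteq> (\<lambda>(i, j). i - j) ` (S \<times> M)" unfolding qresult_def by force
  ultimately show "finite (qresult S M)" by (rule finite_subset[rotated])
  from assms(2) obtain j where "j \<in> M" unfolding allowedB_def by blast
  then obtain i where "i \<in> S" "j \<le> i" using assms(2) unfolding allowedB_def legal_moves_def by blast
  then show "qresult S M \<noteq> {}" using \<open>j \<in> M\<close> unfolding qresult_def by blast
qed

function qgame :: "nat set \<Rightarrow> game" where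
  "qgame S = (if finite S \<and> S \<noteq> {}
      then Game (Abs_fset ((\<lambda>M. qgame (qresult S M)) ` {M. allowedB S M}))
      else Game {||})"
  by auto
termination
proof (relation "measure (\<lambda>S. Max S)")
  fix S M
  assume a: "finite S \<and> S \<noteq> {}" "M \<in> {M. allowedB S M}"
  then have fn: "finite (qresult S M)" "qresult S M \<noteq> {}" using qresult_fin_ne by auto
  have "Max (qresult S M) \<in> qresult S M" using fn by simp
  then have "Max (qresult S M) < Max S" using qresult_less a by auto
  then show "(qresult S M, S) \<in> measure Max" by simp
qed auto

end

theory Submission imports Defs begin

text \<open>By the Sprague--Grundy theory, game equivalence follows from equality of Grundy values,
  so it suffices to compute the Grundy value of \<open>qgame S\<close> by induction on \<open>Max S\<close>.  A Q-move
  \<open>M\<close> leads to a superposition whose largest heap is \<open>Max S - Min M\<close>, so the Grundy value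
  depends only on \<open>k = Max S\<close>.  For \<open>k = 1\<close> the only move leads to heaps of size \<open>0\<close>; for
  \<open>k \<ge> 2\<close> the two-element moves \<open>{k - j, k}\<close> show that every \<open>j \<in> {1..k-1}\<close> (and nothing
  else) occurs as the new maximum, and the mex of the resulting values is \<open>0\<close> for \<open>k = 2\<close>
  and \<open>k - 1\<close> for \<open>k \<ge> 3\<close>.\<close>

definition mex :: "nat set \<Rightarrow> nat" where
  "mex V = (LEAST n. n \<notin> V)"

lemma mex_notin: "finite V \<Longrightarrow> mex V \<notin> V"
  unfolding mex_def by (rule LeastI_ex) (meson ex_new_if_finite infinite_UNIV_nat)

lemma less_mex_in: "m < mex V \<Longrightarrow> m \<in> V"
  unfolding mex_def using not_less_Least by blast

lemma mex_eqI: "(\<And>m. m < n \<Longrightarrow> m \<in> V) \<Longrightarrow> n \<notin> V \<Longrightarrow> mex V = n"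
  unfolding mex_def by (rule Least_equality) (auto simp: not_less[symmetric])

primrec grundy :: "game \<Rightarrow> nat" where
  "grundy (Game A) = mex (fset (fimage grundy A))"

primrec height :: "game \<Rightarrow> nat" where
  "height (Game A) = Suc (Max (insert 0 (fset (fimage height A))))"

lemma height_opt_less: "c |\<in>| opts a \<Longrightarrow> height c < height a"
  by (cases a) (auto simp: less_Suc_eq_le)

lemma grundy_opt_neq: "c |\<in>| opts a \<Longrightarrow> grundy c \<noteq> grundy a"
  using mex_notin[of "grundy ` fset (opts a)"] by (cases a) force

lemma less_grundy_opt: "m < grundy a \<Longrightarrow> \<exists>c. c |\<in>| opts a \<and> grundy c = m"
  by (cases a) (auto dest: less_mex_in)

lemma summoves_iff:
  "(c, d) \<in> summoves (a, b) \<longleftrightarrow> (d = b \<and> c |\<in>| opts a) \<or> (c = a \<and> d |\<in>| opts b)"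
  unfolding summoves_def by auto

lemma grundy_eq_iff_summoves_grundy_neq:
  "grundy a = grundy b \<longleftrightarrow> (\<forall>(c, d) \<in> summoves (a, b). grundy c \<noteq> grundy d)"
proof
  assume "grundy a = grundy b"
  then show "\<forall>(c, d) \<in> summoves (a, b). grundy c \<noteq> grundy d"
    using grundy_opt_neq by (fastforce simp: summoves_iff)
next
  assume no_eq: "\<forall>(c, d) \<in> summoves (a, b). grundy c \<noteq> grundy d"
  show "grundy a = grundy b"
  proof (rule linorder_cases)
    assume "grundy a < grundy b"
    then obtain d where "d |\<in>| opts b" "grundy d = grundy a"
      using less_grundy_opt by blast
    then show ?thesis using no_eq summoves_iff[of a d a b] by auto
  next
    assume "grundy b < grundy a"
    then obtain c where "c |\<in>| opts a" "grundy c = grundy b"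
      using less_grundy_opt by blast
    then show ?thesis using no_eq summoves_iff[of c b a b] by auto
  qed
qed

theorem Nwin_iff_grundy_neq: "Nwin G X \<longleftrightarrow> grundy G \<noteq> grundy X"
proof (induction "height G + height X" arbitrary: G X rule: less_induct)
  case less
  have IH: "Nwin c d \<longleftrightarrow> grundy c \<noteq> grundy d"
    if "p \<in> summoves (G, X)" "(c, d) \<in> summoves p" for p c d
  proof -
    have "height (fst p) + height (snd p) < height G + height X"
      using that(1) by (cases p) (auto simp: summoves_iff dest: height_opt_less)
    moreover have "height c + height d < height (fst p) + height (snd p)"
      using that(2) by (cases p) (auto simp: summoves_iff dest: height_opt_less)
    ultimately show ?thesis by (intro less.hyps) simp
  qed
  have "Nwin G X \<longleftrightarrow> (\<exists>p \<in> summoves (G, X). \<forall>(c, d) \<in> summoves p. Nwin c d)"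
    by (subst Nwin.simps) auto
  also have "\<dots> \<longleftrightarrow> (\<exists>p \<in> summoves (G, X). \<forall>(c, d) \<in> summoves p. grundy c \<noteq> grundy d)"
    using IH by (intro bex_cong ball_cong) auto
  also have "\<dots> \<longleftrightarrow> (\<exists>p \<in> summoves (G, X). grundy (fst p) = grundy (snd p))"
    by (intro bex_cong refl) (metis grundy_eq_iff_summoves_grundy_neq prod.collapse)
  also have "\<dots> \<longleftrightarrow> grundy G \<noteq> grundy X"
    unfolding grundy_eq_iff_summoves_grundy_neq[of G X] by (simp add: case_prod_beta)
  finally show ?case .
qed

corollary game_equiv_if_grundy_eq: "grundy G = grundy H \<Longrightarrow> G \<equiv>\<^sub>g H"
  unfolding game_equiv_def by (simp add: Nwin_iff_grundy_neq)

lemma grundy_nim: "grundy (nim n) = n"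
proof (induction n rule: less_induct)
  case (less n)
  have "fset (nims n) = nim ` {..<n}"
    by (induction n) (auto simp: nim_def lessThan_Suc)
  then have "grundy ` fset (nims n) = {..<n}"
    using less by (force simp: image_image)
  then show ?case
    unfolding nim_def by (auto intro: mex_eqI)
qed

lemma legal_moves_eq:
  assumes "finite S" "S \<noteq> {}"
  shows "legal_moves S = {1..Max S}"
  unfolding legal_moves_def using Max_in[OF assms] Max_ge[OF assms(1)] by auto (meson le_trans)

lemma finite_allowedB: "finite S \<Longrightarrow> S \<noteq> {} \<Longrightarrow> finite {M. allowedB S M}"
  by (rule finite_subset[of _ "Pow {1..Max S}"]) (auto simp: allowedB_def legal_moves_eq)

text \<open>The recursion equation of \<open>qgame\<close> makes the simplifier unfold indefinitely.\<close>
declare qgame.simps [simp del]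

lemma grundy_qgame:
  "finite S \<Longrightarrow> S \<noteq> {} \<Longrightarrow>
    grundy (qgame S) = mex ((\<lambda>M. grundy (qgame (qresult S M))) ` {M. allowedB S M})"
  by (subst qgame.simps) (simp add: Abs_fset_inverse finite_allowedB image_image)

lemma Max_qresult:
  assumes S: "finite S" "S \<noteq> {}" and M: "allowedB S M"
  shows "Max (qresult S M) = Max S - Min M"
proof (rule Max_eqI)
  have M_sub: "M \<subseteq> {1..Max S}" and "M \<noteq> {}"
    using M legal_moves_eq[OF S] unfolding allowedB_def by auto
  then have "finite M"
    using finite_subset by blast
  with \<open>M \<noteq> {}\<close> have "Min M \<in> M"
    by simp
  show "finite (qresult S M)"
    using qresult_fin_ne[OF S(1) M] by blast
  have "Min M \<le> Max S"
    using M_sub \<open>Min M \<in> M\<close> by auto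
  then show "Max S - Min M \<in> qresult S M"
    unfolding qresult_def using Max_in[OF S] \<open>Min M \<in> M\<close> by blast
  show "x \<le> Max S - Min M" if "x \<in> qresult S M" for x
  proof -
    from that obtain i j where "i \<in> S" "j \<in> M" "x = i - j"
      unfolding qresult_def by blast
    have "i - j \<le> Max S - j"
      using S(1) \<open>i \<in> S\<close> by (intro diff_le_mono Max_ge)
    also have "\<dots> \<le> Max S - Min M"
      using \<open>finite M\<close> \<open>j \<in> M\<close> by (intro diff_le_mono2 Min_le)
    finally show ?thesis
      using \<open>x = i - j\<close> by simp
  qed
qed

lemma allowedB_Max_0: "finite S \<Longrightarrow> S \<noteq> {} \<Longrightarrow> Max S = 0 \<Longrightarrow> \<not> allowedB S M"
  unfolding allowedB_def using legal_moves_eq[of S] by auto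

lemma allowedB_Max_1:
  assumes "finite S" "S \<noteq> {}" "Max S = 1"
  shows "allowedB S M \<longleftrightarrow> M = {1}"
proof -
  have legal: "legal_moves S = {1}"
    using assms legal_moves_eq by simp
  show ?thesis
  proof
    assume "allowedB S M"
    then have "M \<noteq> {}" "M \<subseteq> {1}"
      unfolding allowedB_def legal by auto
    then show "M = {1}"
      by blast
  qed (simp add: allowedB_def legal)
qed

lemma allowedB_Max_ge_2:
  assumes "finite S" "S \<noteq> {}" "2 \<le> Max S"
  shows "allowedB S M \<longleftrightarrow> M \<subseteq> {1..Max S} \<and> 2 \<le> card M"
proof -
  have "legal_moves S = {1..Max S}" "card {1..Max S} \<noteq> 1"
    using assms legal_moves_eq by auto
  then show ?thesis
    unfolding allowedB_def by auto
qed

lemma Min_less_of_two_le_card: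
  assumes "finite M" "2 \<le> card M" "M \<subseteq> {..n}"
  shows "Min M < n"
proof -
  have "\<not> M \<subseteq> {Min M}"
    using card_mono[of "{Min M}" M] assms(2) by auto
  then obtain y where "y \<in> M" "y \<noteq> Min M"
    by blast
  then have "Min M < y"
    using Min_le[OF assms(1)] by fastforce
  then show ?thesis
    using assms(3) \<open>y \<in> M\<close> by auto
qed

lemma Max_minus_Min_allowedB_image:
  assumes S: "finite S" "S \<noteq> {}" "2 \<le> Max S"
  shows "(\<lambda>M. Max S - Min M) ` {M. allowedB S M} = {1..Max S - 1}"
proof (intro equalityI subsetI)
  fix x assume "x \<in> (\<lambda>M. Max S - Min M) ` {M. allowedB S M}"
  then obtain M where M: "M \<subseteq> {1..Max S}" "2 \<le> card M" "x = Max S - Min M"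
    using allowedB_Max_ge_2[OF S] by auto
  then have "finite M" "M \<noteq> {}"
    by (auto intro: finite_subset)
  moreover have "M \<subseteq> {..Max S}"
    using M(1) by auto
  ultimately have "1 \<le> Min M" "Min M < Max S"
    using M Min_less_of_two_le_card[of M "Max S"] by auto
  then show "x \<in> {1..Max S - 1}" using M(3) by auto
next
  fix x assume x: "x \<in> {1..Max S - 1}"
  then have "allowedB S {Max S - x, Max S}" and "Min {Max S - x, Max S} = Max S - x"
    using allowedB_Max_ge_2[OF S] by auto
  with x show "x \<in> (\<lambda>M. Max S - Min M) ` {M. allowedB S M}"
    by (intro image_eqI[of _ _ "{Max S - x, Max S}"]) auto
qed

text \<open>The value for \<open>k = 0\<close> is \<open>0\<close> through truncated subtraction; it is needed for the
  superpositions of empty heaps reached during the induction.\<close>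
definition ruleset_B_value :: "nat \<Rightarrow> nat" where
  "ruleset_B_value k = (if k = 2 then 0 else if k = 1 then 1 else k - 1)"

lemma mex_ruleset_B_value_image:
  assumes "2 \<le> k"
  shows "mex (ruleset_B_value ` {1..k - 1}) = ruleset_B_value k"
proof (cases "k = 2")
  case True
  then show ?thesis by (auto simp: ruleset_B_value_def intro!: mex_eqI)
next
  case False
  have "ruleset_B_value ` {1..k - 1} = {..<k - 1}"
  proof (intro equalityI subsetI)
    fix m assume "m \<in> {..<k - 1}"
    then have "ruleset_B_value (if m = 0 then 2 else if m = 1 then 1 else m + 1) = m"
      and "(if m = 0 then 2 else if m = 1 then 1 else m + 1) \<in> {1..k - 1}"
      using assms False by (auto simp: ruleset_B_value_def)
    then show "m \<in> ruleset_B_value ` {1..k - 1}" by (metis image_eqI)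
  qed (use assms False in \<open>auto simp: ruleset_B_value_def\<close>)
  then show ?thesis
    using assms False by (auto simp: ruleset_B_value_def intro!: mex_eqI)
qed

theorem grundy_qgame_eq: "finite S \<Longrightarrow> S \<noteq> {} \<Longrightarrow> grundy (qgame S) = ruleset_B_value (Max S)"
proof (induction "Max S" arbitrary: S rule: less_induct)
  case less
  have opt: "grundy (qgame (qresult S M)) = ruleset_B_value (Max S - Min M)" if "allowedB S M" for M
  proof -
    have ne: "finite (qresult S M)" "qresult S M \<noteq> {}"
      using qresult_fin_ne less.prems that by auto
    then have "Max (qresult S M) < Max S"
      using qresult_less[OF less.prems(1) that] Max_in by blast
    then show ?thesis
      using less.hyps[OF _ ne] Max_qresult[OF less.prems that] by simp
  qed
  have "(\<lambda>M. grundy (qgame (qresult S M))) ` {M. allowedB S M}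
      = ruleset_B_value ` (\<lambda>M. Max S - Min M) ` {M. allowedB S M}"
    unfolding image_image using opt by (intro image_cong) auto
  then have g: "grundy (qgame S) = mex (ruleset_B_value ` (\<lambda>M. Max S - Min M) ` {M. allowedB S M})"
    using grundy_qgame[OF less.prems] by simp
  consider "Max S = 0" | "Max S = 1" | "2 \<le> Max S" by linarith
  then show ?case
  proof cases
    case 1
    then show ?thesis
      using g allowedB_Max_0[OF less.prems] by (auto simp: ruleset_B_value_def intro: mex_eqI)
  next
    case 2
    then have "{M. allowedB S M} = {{1}}"
      using allowedB_Max_1[OF less.prems] by auto
    then show ?thesis
      using g 2 by (auto simp: ruleset_B_value_def intro!: mex_eqI)
  next
    case 3
    then show ?thesis
      using g Max_minus_Min_allowedB_image[OF less.prems] mex_ruleset_B_value_image by simp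
  qed
qed

theorem lemma2:
  fixes S :: "nat set" and k :: nat
  assumes "finite S" and "S \<noteq> {}" and "k = Max S" and "k \<ge> 1"
  shows "qgame S \<equiv>\<^sub>g (if k = 2 then nim 0 else if k = 1 then nim 1 else nim (k - 1))"
proof (rule game_equiv_if_grundy_eq)
  show "grundy (qgame S) = grundy (if k = 2 then nim 0 else if k = 1 then nim 1 else nim (k - 1))"
    using grundy_qgame_eq[OF assms(1,2)] assms(3) by (simp add: grundy_nim ruleset_B_value_def)
qed

end
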